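(* For all integers $n\geq 0$, $k\geq 0$ and $\alpha>2k+1$, $$\overline{B}_{2^\alpha,3}\big(4^k(4n+3)\big)\equiv 0\pmod 6.$$ Moreover, for all integers $n\ge 0$ and $\alpha>2$, $$\overline{B}_{2^\alpha,3}(8n+7)\equiv 0\pmod{12}.$$
   Context: An overpartition of a nonnegative integer $n$ is a partition of $n$ (a non-increasing sequence of positive integers summing to $n$) in which the first occurrence of each distinct part may be overlined. For relatively prime integers $\ell_1,\ell_2>1$, an $(\ell_1,\ell_2)$-biregular overpartition of $n$ is an overpartition of $n$ none of whose parts is divisible by $\ell_1$ or by $\ell_2$, and $\overline{B}_{\ell_1,\ell_2}(n)$ denotes the number of such overpartitions ($\overline{B}_{\ell_1,\ell_2}(0)=1$). Equivalently, writing $f_k=(q^k;q^k)_\infty=\prod_{m\ge1}(1-q^{km})$ for $|q|<1$, $$\sum_{n\ge0}\overline{B}_{\ell_1,\ell_2}(n)q^n=\frac{f_2\, f_{\ell_1}^2\, f_{\ell_2}^2\, f_{2\ell_1\ell_2}}{f_1^2\, f_{2\ell_1}\, f_{2\ell_2}\, f_{\ell_1\ell_2}^2}.$$ *)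

theory Defs
  imports Main "HOL-Library.Multiset" "HOL-Number_Theory.Cong"
begin

text \<open>An overpartition of n: a partition of n (a multiset of positive integers
summing to n) together with the set of distinct parts whose first occurrence
is overlined (any subset of the set of distinct parts).\<close>
definition overpartitions :: "nat \<Rightarrow> (nat multiset \<times> nat set) set" where
  "overpartitions n = {(M, S). (\<forall>x\<in>#M. 0 < x) \<and> sum_mset M = n \<and> S \<subseteq> set_mset M}"

definition biregular_overpartitions :: "nat \<Rightarrow> nat \<Rightarrow> nat \<Rightarrow> (nat multiset \<times> nat set) set" where
  "biregular_overpartitions l1 l2 n =
     {(M, S) \<in> overpartitions n. \<forall>x\<in>#M. \<not> l1 dvd x \<and> \<not> l2 dvd x}"

definition Bbar :: "nat \<Rightarrow> nat \<Rightarrow> nat \<Rightarrow> nat" where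
  "Bbar l1 l2 n = card (biregular_overpartitions l1 l2 n)"

end

theory Submission
  imports Defs "HOL-Library.Numeral_Type" "HOL-Library.Disjoint_Sets"
    "HOL-Computational_Algebra.Formal_Power_Series"
begin

text \<open>The generating function of \<open>B\<^sub>L\<^sub>,\<^sub>3\<close> is the product of \<open>(1 + q\<^sup>m) / (1 - q\<^sup>m)\<close> over the
  \<open>m\<close> divisible by neither \<open>L\<close> nor \<open>3\<close>. Modulo \<open>3\<close>, inclusion-exclusion and the Frobenius
  map turn it into \<open>P\<^sub>L\<^sup>2 \<theta>\<^sup>2\<close>, where \<open>P\<^sub>L\<close> is supported on multiples of \<open>L\<close> and
  \<open>\<theta> = \<Prod>\<^sub>n (1 - q\<^sup>n) / (1 + q\<^sup>n) = \<Sum>\<^sub>j (-1)\<^sup>j q\<^bsup>j\<^sup>2\<^esup>\<close> by Gauss's identity, obtained here from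
  Rothe's \<open>q\<close>-binomial theorem. So the coefficient of \<open>q\<^sup>N\<close> vanishes modulo \<open>3\<close> as soon as
  \<open>N - i\<close> is never a sum of two squares for \<open>L dvd i\<close>; for \<open>L = 2\<^sup>\<alpha>\<close> and
  \<open>N = 4\<^sup>k (4 n + 3)\<close> with \<open>\<alpha> > 2 k + 1\<close>, every such \<open>N - i\<close> again has this form.
  Modulo \<open>4\<close> all cross terms of the product carry a factor \<open>4\<close>, so
  \<open>B\<^sub>L\<^sub>,\<^sub>3(N) \<equiv> 2 #{d dvd N. \<not> L dvd d \<and> \<not> 3 dvd d} (mod 4)\<close>. This is even, and
  divisible by \<open>4\<close> for \<open>N = 8 n + 7\<close>: removing the factors \<open>3\<close> from \<open>N\<close> leaves a non-square, so these divisors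
  pair off. All computations are with formal power series over \<open>\<int>/3\<close> and \<open>\<int>/4\<close>, compared
  modulo a power of \<open>q\<close>.\<close>

section \<open>Sums of two squares and divisors\<close>

lemma power2_mod_4: "(x::nat)\<^sup>2 mod 4 = (if even x then 0 else 1)"
proof (cases "even x")
  case True
  then obtain a where "x = 2 * a" by blast
  then show ?thesis by (simp add: power2_eq_square)
next
  case False
  then obtain a where a: "x = 2 * a + 1" using oddE by blast
  have "x\<^sup>2 = 4 * (a * a + a) + 1" unfolding a by (simp add: power2_eq_square algebra_simps)
  then show ?thesis using False by simp
qed

lemma sum_two_squares_neq_4_power_mult:
  "(x::nat)\<^sup>2 + y\<^sup>2 \<noteq> 4 ^ k * (4 * n + 3)"
proof (induction k arbitrary: x y)
  case 0
  have "(x\<^sup>2 + y\<^sup>2) mod 4 = (x\<^sup>2 mod 4 + y\<^sup>2 mod 4) mod 4" by (simp add: mod_add_eq)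
  then have "(x\<^sup>2 + y\<^sup>2) mod 4 \<noteq> 3" by (simp add: power2_mod_4)
  moreover have "(4 ^ 0 * (4 * n + 3)) mod 4 = (3::nat)" by simp
  ultimately show ?case by metis
next
  case (Suc k)
  show ?case
  proof
    assume sum: "x\<^sup>2 + y\<^sup>2 = 4 ^ Suc k * (4 * n + 3)"
    then have "(x\<^sup>2 mod 4 + y\<^sup>2 mod 4) mod 4 = 0" by (simp add: mod_add_eq)
    then have "even x" "even y" by (auto simp: power2_mod_4 split: if_splits)
    then obtain a b where ab: "x = 2 * a" "y = 2 * b" by (auto elim!: evenE)
    have "a\<^sup>2 + b\<^sup>2 = 4 ^ k * (4 * n + 3)" using sum unfolding ab by (simp add: power2_eq_square)
    then show False using Suc.IH by blast
  qed
qed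

lemma four_power_mult_diff_multiple:
  fixes k n i \<alpha> :: nat
  assumes "2 * k + 1 < \<alpha>" "2 ^ \<alpha> dvd i" "i \<le> 4 ^ k * (4 * n + 3)"
  obtains n' where "4 ^ k * (4 * n + 3) - i = 4 ^ k * (4 * n' + 3)"
proof -
  have "(2::nat) ^ (2 * k + 2) dvd 2 ^ \<alpha>" using assms(1) by (intro le_imp_power_dvd) simp
  moreover have "(2::nat) ^ (2 * k + 2) = 4 ^ k * 4" by (simp add: power_add power_mult)
  ultimately have "4 ^ k * 4 dvd i" using assms(2) by (metis dvd_trans)
  then obtain t where t: "i = 4 ^ k * (4 * t)" by (auto elim!: dvdE simp: ac_simps)
  have "t \<le> n" using assms(3) unfolding t by simp
  then have "4 ^ k * (4 * n + 3) - i = 4 ^ k * (4 * (n - t) + 3)"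
    unfolding t by (simp add: diff_mult_distrib2 algebra_simps)
  then show ?thesis by (rule that)
qed

lemma even_card_divisors_if_not_square:
  assumes r: "0 < (r::nat)" and not_square: "\<And>d. d * d \<noteq> r"
  shows "even (card {m. m dvd r})"
proof -
  have "(\<Sum>m | m dvd r. 1 :: 2) = 0"
  proof (rule sum_involution_eq_0[where h = "\<lambda>m. r div m"])
    fix m assume m: "m \<in> {m. m dvd r}"
    then show "r div m \<in> {m. m dvd r}" by (auto simp: div_dvd_iff_mult r)
    show "r div (r div m) = m" using m r by (auto simp: div_div_eq_right dvd_div_eq_0_iff)
    show "r div m \<noteq> m" using m not_square by (metis dvd_mult_div_cancel mem_Collect_eq)
  qed simp
  then show ?thesis by (simp add: of_nat_eq_0_iff_char_dvd)
qed

lemma square_mod_8: "((d::nat) * d) mod 8 \<in> {0, 1, 4}"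
proof -
  have "\<forall>r\<in>{..<8::nat}. (r * r) mod 8 \<in> {0, 1, 4}" by (simp add: lessThan_nat_numeral)
  moreover have "(d * d) mod 8 = ((d mod 8) * (d mod 8)) mod 8" by (rule mod_mult_eq[symmetric])
  ultimately show ?thesis by simp
qed

text \<open>\<open>3 * 5 \<equiv> 7\<close> and \<open>3 * 7 \<equiv> 5 (mod 8)\<close>, while squares are \<open>0, 1, 4 (mod 8)\<close>.\<close>

lemma even_card_divisors_not_dvd_3:
  assumes "N mod 8 = 5 \<or> N mod 8 = 7"
  shows "even (card {m. m dvd (N::nat) \<and> \<not> 3 dvd m})"
  using assms
proof (induction N rule: less_induct)
  case (less N)
  have "0 < N" using less.prems by (auto intro: gr0I)
  show ?case
  proof (cases "3 dvd N")
    case True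
    then obtain N' where N': "N = 3 * N'" by blast
    have "\<forall>r\<in>{..<8::nat}. (3 * r) mod 8 = 5 \<or> (3 * r) mod 8 = 7 \<longrightarrow> r = 5 \<or> r = 7"
      by (simp add: lessThan_nat_numeral)
    moreover have "(3 * N') mod 8 = (3 * (N' mod 8)) mod 8" by (simp add: mod_mult_right_eq)
    moreover have "N' mod 8 \<in> {..<8}" by simp
    ultimately have "N' mod 8 = 5 \<or> N' mod 8 = 7" using less.prems unfolding N' by metis
    moreover have "N' < N" using \<open>0 < N\<close> N' by simp
    moreover have "{m. m dvd N \<and> \<not> 3 dvd m} = {m. m dvd N' \<and> \<not> 3 dvd m}"
      unfolding N' by (auto simp: coprime_dvd_mult_right_iff prime_imp_coprime coprime_commute[of _ 3])
    ultimately show ?thesis using less.IH by simp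
  next
    case False
    then have "{m. m dvd N \<and> \<not> 3 dvd m} = {m. m dvd N}" by (auto intro: dvd_trans)
    moreover have "d * d \<noteq> N" for d using square_mod_8[of d] less.prems by auto
    ultimately show ?thesis using even_card_divisors_if_not_square[OF \<open>0 < N\<close>] by simp
  qed
qed

section \<open>Power series modulo powers of \<open>X\<close>\<close>

definition fps_cong :: "nat \<Rightarrow> 'a::comm_ring_1 fps \<Rightarrow> 'a fps \<Rightarrow> bool" where
  "fps_cong d f g \<longleftrightarrow> fps_X ^ d dvd (f - g)"

lemma fps_cong_refl [simp]: "fps_cong d f f"
  by (simp add: fps_cong_def)

lemma fps_cong_sym: "fps_cong d f g \<Longrightarrow> fps_cong d g f"
  unfolding fps_cong_def by (subst minus_diff_eq[symmetric]) (simp only: dvd_minus_iff)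

lemma fps_cong_trans [trans]: "fps_cong d f g \<Longrightarrow> fps_cong d g h \<Longrightarrow> fps_cong d f h"
  unfolding fps_cong_def by (drule (1) dvd_add) simp

lemma fps_cong_add: "fps_cong d f f' \<Longrightarrow> fps_cong d g g' \<Longrightarrow> fps_cong d (f + g) (f' + g')"
  unfolding fps_cong_def by (drule (1) dvd_add) (simp add: add_diff_add)

lemma fps_cong_mult:
  assumes "fps_cong d f f'" "fps_cong d g g'"
  shows "fps_cong d (f * g) (f' * g')"
proof -
  have "f * g - f' * g' = f * (g - g') + (f - f') * g'" by (simp add: algebra_simps)
  then show ?thesis using assms unfolding fps_cong_def by (simp add: dvd_add dvd_mult dvd_mult2)
qed

lemma fps_cong_power: "fps_cong d f g \<Longrightarrow> fps_cong d (f ^ n) (g ^ n)"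
  by (induction n) (auto intro: fps_cong_mult)

lemma fps_cong_sum: "(\<And>x. x \<in> S \<Longrightarrow> fps_cong d (f x) (g x)) \<Longrightarrow> fps_cong d (sum f S) (sum g S)"
  by (induction S rule: infinite_finite_induct) (auto intro: fps_cong_add)

lemma fps_cong_prod_1: "(\<And>x. x \<in> S \<Longrightarrow> fps_cong d (f x) 1) \<Longrightarrow> fps_cong d (prod f S) 1"
  by (induction S rule: infinite_finite_induct) (auto intro: fps_cong_mult[of d _ 1 _ 1, simplified])

lemma fps_cong_mono: "d' \<le> d \<Longrightarrow> fps_cong d f g \<Longrightarrow> fps_cong d' f g"
  unfolding fps_cong_def by (meson dvd_trans le_imp_power_dvd)

lemma fps_cong_nth_eq:
  assumes "fps_cong d f g" "n < d"
  shows "fps_nth f n = fps_nth g n"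
proof -
  obtain k where "f - g = fps_X ^ d * k" using assms(1) unfolding fps_cong_def by blast
  then have "fps_nth (f - g) n = 0" using assms(2) by (simp add: fps_X_power_mult_nth)
  then show ?thesis by simp
qed

lemma fps_cong_X_power_mult:
  assumes "fps_cong d f g"
  shows "fps_cong (d + e) (fps_X ^ e * f) (fps_X ^ e * g)"
proof -
  obtain k where k: "f - g = fps_X ^ d * k" using assms unfolding fps_cong_def by blast
  have "fps_X ^ e * f - fps_X ^ e * g = fps_X ^ e * (f - g)" by (simp add: right_diff_distrib)
  also have "\<dots> = fps_X ^ (d + e) * k" by (simp add: k power_add ac_simps)
  finally show ?thesis unfolding fps_cong_def by simp
qed

lemma fps_cong_1_plus_X_power: "d \<le> m \<Longrightarrow> fps_cong d (1 + fps_X ^ m * h) 1"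
  unfolding fps_cong_def by (simp add: le_imp_power_dvd dvd_mult2)

lemma fps_cong_1_minus_X_power: "d \<le> m \<Longrightarrow> fps_cong d (1 - fps_X ^ m) 1"
  using fps_cong_1_plus_X_power[of d m "-1"] by simp

section \<open>The overpartition generating function\<close>

text \<open>The geometric series \<open>1 / (1 - X\<^sup>m)\<close>, defined by its coefficients so that no inverse
  is needed over an arbitrary commutative ring.\<close>

definition fps_geom :: "nat \<Rightarrow> 'a::comm_ring_1 fps" where
  "fps_geom m = Abs_fps (\<lambda>n. if m dvd n then 1 else 0)"

lemma fps_geom_nth: "fps_nth (fps_geom m) n = (if m dvd n then 1 else 0)"
  by (simp add: fps_geom_def)

lemma X_power_mult_fps_geom_nth:
  assumes "0 < m"
  shows "fps_nth (fps_X ^ m * fps_geom m :: 'a::comm_ring_1 fps) n = (if n \<noteq> 0 \<and> m dvd n then 1 else 0)"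
proof (cases "n < m")
  case True
  then have "\<not> (n \<noteq> 0 \<and> m dvd n)" by (auto dest: dvd_imp_le)
  then show ?thesis using True by (simp add: fps_X_power_mult_nth)
next
  case False
  then have "m dvd (n - m) \<longleftrightarrow> m dvd n" by (simp add: dvd_minus_self)
  then show ?thesis using False assms by (simp add: fps_X_power_mult_nth fps_geom_nth)
qed

lemma fps_geom_unfold:
  assumes "0 < m"
  shows "(fps_geom m :: 'a::comm_ring_1 fps) = 1 + fps_X ^ m * fps_geom m"
proof (rule fps_ext)
  fix n
  show "fps_nth (fps_geom m :: 'a fps) n = fps_nth (1 + fps_X ^ m * fps_geom m) n"
    using assms X_power_mult_fps_geom_nth[OF assms, of n] by (auto simp: fps_geom_nth)
qed

lemma one_minus_X_power_mult_fps_geom: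
  assumes "0 < m"
  shows "(1 - fps_X ^ m) * (fps_geom m :: 'a::comm_ring_1 fps) = 1"
proof -
  have "(1 - fps_X ^ m) * (fps_geom m :: 'a fps) = fps_geom m - fps_X ^ m * fps_geom m"
    by (simp add: left_diff_distrib)
  also have "\<dots> = 1" using fps_geom_unfold[OF assms] by (metis add_diff_cancel_right')
  finally show ?thesis .
qed

lemma fps_cong_fps_geom: "0 < m \<Longrightarrow> d \<le> m \<Longrightarrow> fps_cong d (fps_geom m :: 'a::comm_ring_1 fps) 1"
  by (subst fps_geom_unfold) (simp_all add: fps_cong_1_plus_X_power)

definition ovp_factor :: "nat \<Rightarrow> 'a::comm_ring_1 fps" where
  "ovp_factor m = (1 + fps_X ^ m) * fps_geom m"

definition ovp_factor_inv :: "nat \<Rightarrow> 'a::comm_ring_1 fps" where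
  "ovp_factor_inv m = (1 - fps_X ^ m)\<^sup>2 * fps_geom (2 * m)"

lemma ovp_factor_eq:
  assumes "0 < m"
  shows "(ovp_factor m :: 'a::comm_ring_1 fps) = 1 + 2 * (fps_X ^ m * fps_geom m)"
proof -
  have "(1 + x) * g = 2 * (x * g) + (1 - x) * g" for x g :: "'a fps"
    by (simp add: algebra_simps mult_2)
  then have "(ovp_factor m :: 'a fps) = 2 * (fps_X ^ m * fps_geom m) + (1 - fps_X ^ m) * fps_geom m"
    unfolding ovp_factor_def .
  then show ?thesis using one_minus_X_power_mult_fps_geom[OF assms] by simp
qed

lemma ovp_factor_nth:
  assumes "0 < m"
  shows "fps_nth (ovp_factor m :: 'a::comm_ring_1 fps) n = (if n = 0 then 1 else if m dvd n then 2 else 0)"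
proof -
  have "fps_nth (ovp_factor m :: 'a fps) n =
      fps_nth 1 n + fps_nth (fps_X ^ m * fps_geom m) n + fps_nth (fps_X ^ m * fps_geom m) n"
    by (simp only: ovp_factor_eq[OF assms] mult_2 fps_add_nth add.assoc)
  then show ?thesis by (simp add: X_power_mult_fps_geom_nth[OF assms])
qed

lemma fps_cong_ovp_factor:
  assumes "0 < m" "d \<le> m"
  shows "fps_cong d (ovp_factor m :: 'a::comm_ring_1 fps) 1"
proof -
  have "(ovp_factor m :: 'a fps) = 1 + fps_X ^ m * (2 * fps_geom m)"
    using ovp_factor_eq[OF assms(1)] by (simp only: mult.left_commute)
  then show ?thesis using assms(2) by (simp add: fps_cong_1_plus_X_power)
qed

lemma ovp_factor_mult_inv:
  assumes "0 < m"
  shows "ovp_factor m * ovp_factor_inv m = (1 :: 'a::comm_ring_1 fps)"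
proof -
  have regroup: "(1 + x) * g * ((1 - x)\<^sup>2 * h) = (1 - x * x) * h * ((1 - x) * g)" for x g h :: "'a fps"
    by (simp add: power2_eq_square algebra_simps)
  have "ovp_factor m * ovp_factor_inv m =
      (1 - fps_X ^ m * fps_X ^ m) * fps_geom (2 * m) * ((1 - fps_X ^ m) * (fps_geom m :: 'a fps))"
    unfolding ovp_factor_def ovp_factor_inv_def by (rule regroup)
  also have "\<dots> = ((1 - fps_X ^ (2 * m)) * fps_geom (2 * m)) * ((1 - fps_X ^ m) * fps_geom m)"
    by (simp only: mult_2 power_add)
  also have "\<dots> = 1" using assms by (simp add: one_minus_X_power_mult_fps_geom)
  finally show ?thesis .
qed

definition ovp_prod :: "nat set \<Rightarrow> 'a::comm_ring_1 fps" where
  "ovp_prod S = (\<Prod>m\<in>S. ovp_factor m)"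

definition ovp_prod_inv :: "nat set \<Rightarrow> 'a::comm_ring_1 fps" where
  "ovp_prod_inv S = (\<Prod>m\<in>S. ovp_factor_inv m)"

lemma ovp_prod_mult_inv: "0 \<notin> S \<Longrightarrow> ovp_prod S * ovp_prod_inv S = (1 :: 'a::comm_ring_1 fps)"
  unfolding ovp_prod_def ovp_prod_inv_def prod.distrib[symmetric]
  by (rule prod.neutral) (metis ovp_factor_mult_inv gr0I)

definition overpartitions_with_parts :: "nat set \<Rightarrow> nat \<Rightarrow> (nat multiset \<times> nat set) set" where
  "overpartitions_with_parts P N = {(M, S). set_mset M \<subseteq> P \<and> sum_mset M = N \<and> S \<subseteq> set_mset M}"

text \<open>An overpartition with parts in \<open>insert p P\<close> is built from one with parts in \<open>P\<close> by adding
  the parts equal to \<open>p\<close>, of total size \<open>i\<close>, and deciding whether \<open>p\<close> is overlined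
  (possible only if \<open>i > 0\<close>).\<close>

definition part_choices :: "nat \<Rightarrow> nat \<Rightarrow> (nat \<times> bool) set" where
  "part_choices p N = Sigma {i. i \<le> N \<and> p dvd i} (\<lambda>i. if i = 0 then {False} else UNIV)"

definition add_parts ::
    "nat \<Rightarrow> (nat \<times> bool) \<times> (nat multiset \<times> nat set) \<Rightarrow> nat multiset \<times> nat set" where
  "add_parts p x = (case x of ((i, b), (M, S)) \<Rightarrow>
     (M + replicate_mset (i div p) p, if b then insert p S else S))"

lemma overpartitions_with_parts_empty:
  "overpartitions_with_parts {} N = (if N = 0 then {({#}, {})} else {})"
  by (auto simp: overpartitions_with_parts_def)

lemma overpartitions_with_parts_insert:
  assumes p: "0 < p" "p \<notin> P"
  shows "overpartitions_with_parts (insert p P) N =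
    add_parts p ` Sigma (part_choices p N) (\<lambda>x. overpartitions_with_parts P (N - fst x))"
    (is "?lhs = add_parts p ` ?choices")
proof (rule set_eqI iffI)+
  fix z assume z: "z \<in> ?lhs"
  obtain M S where zMS: "z = (M, S)" by fastforce
  define j where "j = count M p"
  define M0 where "M0 = {#x \<in># M. x \<noteq> p#}"
  have M: "M = M0 + replicate_mset j p"
    unfolding M0_def j_def by (rule multiset_eqI) simp
  have hM: "set_mset M \<subseteq> insert p P" "sum_mset M = N" "S \<subseteq> set_mset M"
    using z zMS by (auto simp: overpartitions_with_parts_def)
  have "sum_mset M0 + j * p = N" using hM(2) by (subst (asm) M) simp
  moreover have "p \<in> S \<Longrightarrow> j \<noteq> 0" using hM(3) by (auto simp: j_def)
  ultimately have "((j * p, p \<in> S), (M0, S - {p})) \<in> ?choices"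
    using hM p unfolding part_choices_def overpartitions_with_parts_def by (auto simp: M0_def)
  moreover have "add_parts p ((j * p, p \<in> S), (M0, S - {p})) = z"
    unfolding add_parts_def zMS using p M by auto
  ultimately show "z \<in> add_parts p ` ?choices" by (metis image_eqI)
next
  fix z assume "z \<in> add_parts p ` ?choices"
  then obtain i b M S where h: "((i, b), (M, S)) \<in> ?choices" and z: "z = add_parts p ((i, b), (M, S))"
    by auto
  from h have i: "i \<le> N" "p dvd i" "b \<Longrightarrow> i \<noteq> 0"
    and MS: "set_mset M \<subseteq> P" "sum_mset M = N - i" "S \<subseteq> set_mset M"
    by (auto simp: part_choices_def overpartitions_with_parts_def split: if_splits)
  have "sum_mset (M + replicate_mset (i div p) p) = N" using MS(2) i(1,2) by simp
  moreover have "b \<Longrightarrow> p \<in># replicate_mset (i div p) p" using i p by (auto elim!: dvdE)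
  ultimately show "z \<in> ?lhs" unfolding z add_parts_def overpartitions_with_parts_def using MS by auto
qed

lemma inj_on_add_parts:
  assumes p: "0 < p" "p \<notin> P"
  shows "inj_on (add_parts p) (Sigma (part_choices p N) (\<lambda>x. overpartitions_with_parts P (N - fst x)))"
    (is "inj_on _ ?choices")
proof (rule inj_onI)
  fix x y assume x: "x \<in> ?choices" and y: "y \<in> ?choices" and e: "add_parts p x = add_parts p y"
  obtain i b M S i' b' M' S' where xy: "x = ((i, b), (M, S))" "y = ((i', b'), (M', S'))"
    by (metis prod.collapse)
  have i: "p dvd i" "p dvd i'" and p_notin: "p \<notin># M" "p \<notin># M'" "p \<notin> S" "p \<notin> S'"
    using x y p unfolding xy by (auto simp: part_choices_def overpartitions_with_parts_def)
  from e have e1: "M + replicate_mset (i div p) p = M' + replicate_mset (i' div p) p"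
    and e2: "(if b then insert p S else S) = (if b' then insert p S' else S')"
    unfolding xy add_parts_def by auto
  have "count (M + replicate_mset (i div p) p) p = count (M' + replicate_mset (i' div p) p) p"
    using e1 by simp
  then have "i div p = i' div p" using p_notin by (simp add: not_in_iff)
  then have "i = i'" using i by (metis dvd_div_mult_self)
  moreover have "b = b'" "S = S'" using e2 p_notin by (auto split: if_splits)
  ultimately show "x = y" unfolding xy using e1 by simp
qed

lemma card_overpartitions_with_parts_insert:
  assumes p: "0 < p" "p \<notin> P" and fin: "\<And>n. finite (overpartitions_with_parts P n)"
  shows "finite (overpartitions_with_parts (insert p P) N)"
    and "card (overpartitions_with_parts (insert p P) N) =
      (\<Sum>i | i \<le> N \<and> p dvd i. (if i = 0 then 1 else 2) * card (overpartitions_with_parts P (N - i)))"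
proof -
  let ?choices = "Sigma (part_choices p N) (\<lambda>x. overpartitions_with_parts P (N - fst x))"
  have fin_choices: "finite (part_choices p N)"
    unfolding part_choices_def by (rule finite_SigmaI) auto
  then show "finite (overpartitions_with_parts (insert p P) N)"
    unfolding overpartitions_with_parts_insert[OF p] using fin by auto
  have "card (overpartitions_with_parts (insert p P) N) = card ?choices"
    unfolding overpartitions_with_parts_insert[OF p] by (rule card_image[OF inj_on_add_parts[OF p]])
  also have "\<dots> = (\<Sum>x\<in>part_choices p N. card (overpartitions_with_parts P (N - fst x)))"
    by (rule card_SigmaI) (use fin_choices fin in auto)
  also have "\<dots> = (\<Sum>i | i \<le> N \<and> p dvd i.
      \<Sum>b\<in>(if i = 0 then {False} else UNIV). card (overpartitions_with_parts P (N - i)))"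
    unfolding part_choices_def by (subst sum.Sigma) (auto simp: split_def)
  also have "\<dots> = (\<Sum>i | i \<le> N \<and> p dvd i. (if i = 0 then 1 else 2) * card (overpartitions_with_parts P (N - i)))"
    by (intro sum.cong refl) (auto simp: UNIV_bool mult_2)
  finally show "card (overpartitions_with_parts (insert p P) N) = \<dots>" .
qed

lemma finite_overpartitions_with_parts:
  assumes "finite P" "0 \<notin> P"
  shows "finite (overpartitions_with_parts P N)"
  using assms
proof (induction P arbitrary: N rule: finite_induct)
  case empty
  then show ?case by (simp add: overpartitions_with_parts_empty)
next
  case (insert p P)
  then show ?case by (intro card_overpartitions_with_parts_insert(1)) auto
qed

lemma nth_ovp_prod:
  assumes "finite P" "0 \<notin> P"
  shows "fps_nth (ovp_prod P :: 'a::comm_ring_1 fps) N = of_nat (card (overpartitions_with_parts P N))"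
  using assms
proof (induction P arbitrary: N rule: finite_induct)
  case empty
  then show ?case by (simp add: ovp_prod_def overpartitions_with_parts_empty)
next
  case (insert p P)
  have p: "0 < p" "p \<notin> P" using insert by auto
  have fin: "finite (overpartitions_with_parts P n)" for n
    using insert by (simp add: finite_overpartitions_with_parts)
  have "fps_nth (ovp_prod (insert p P) :: 'a fps) N =
      (\<Sum>i=0..N. fps_nth (ovp_factor p :: 'a fps) i * fps_nth (ovp_prod P) (N - i))"
    using insert by (simp add: ovp_prod_def fps_mult_nth)
  also have "\<dots> = (\<Sum>i\<in>{0..N}. if p dvd i
      then of_nat ((if i = 0 then 1 else 2) * card (overpartitions_with_parts P (N - i))) else 0)"
    using insert by (intro sum.cong refl) (auto simp: ovp_factor_nth[OF p(1)])
  also have "\<dots> = (\<Sum>i\<in>{i\<in>{0..N}. p dvd i}.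
      of_nat ((if i = 0 then 1 else 2) * card (overpartitions_with_parts P (N - i))))"
    by (rule sum.inter_filter[symmetric]) simp
  also have "{i\<in>{0..N}. p dvd i} = {i. i \<le> N \<and> p dvd i}" by auto
  also have "(\<Sum>i\<in>{i. i \<le> N \<and> p dvd i}.
      of_nat ((if i = 0 then 1 else 2) * card (overpartitions_with_parts P (N - i)))) =
      (of_nat (card (overpartitions_with_parts (insert p P) N)) :: 'a)"
    unfolding card_overpartitions_with_parts_insert(2)[OF p fin] by simp
  finally show ?case .
qed

lemma biregular_overpartitions_eq:
  assumes "N \<le> K"
  shows "biregular_overpartitions l1 l2 N =
    overpartitions_with_parts {m\<in>{1..K}. \<not> l1 dvd m \<and> \<not> l2 dvd m} N"
proof -
  have part_le: "x \<le> sum_mset M" if x: "x \<in># M" for x and M :: "nat multiset"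
  proof -
    obtain M' where "M = add_mset x M'" using x by (blast dest: multi_member_split)
    then show ?thesis by simp
  qed
  have parts_in: "set_mset M \<subseteq> {m\<in>{1..K}. \<not> l1 dvd m \<and> \<not> l2 dvd m} \<longleftrightarrow>
      (\<forall>x\<in>#M. 0 < x \<and> \<not> l1 dvd x \<and> \<not> l2 dvd x)" if "sum_mset M = N" for M
    using that assms part_le[of _ M] by (force simp: Suc_le_eq)
  show ?thesis unfolding biregular_overpartitions_def overpartitions_def overpartitions_with_parts_def
    using parts_in by blast
qed

lemma of_nat_Bbar:
  assumes "N \<le> K"
  shows "(of_nat (Bbar l1 l2 N) :: 'a::comm_ring_1) =
    fps_nth (ovp_prod {m\<in>{1..K}. \<not> l1 dvd m \<and> \<not> l2 dvd m} :: 'a fps) N"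
  unfolding Bbar_def biregular_overpartitions_eq[OF assms] by (rule nth_ovp_prod[symmetric]) auto

section \<open>Gauss's identity\<close>

fun qbinom :: "'a::comm_ring_1 \<Rightarrow> nat \<Rightarrow> nat \<Rightarrow> 'a" where
  "qbinom b 0 k = (if k = 0 then 1 else 0)"
| "qbinom b (Suc n) 0 = 1"
| "qbinom b (Suc n) (Suc k) = qbinom b n (Suc k) + b ^ (n - k) * qbinom b n k"

lemma qbinom_eq_0: "n < k \<Longrightarrow> qbinom b n k = 0"
proof (induction n arbitrary: k)
  case (Suc n)
  then show ?case by (cases k) auto
qed simp

lemma qbinom_0 [simp]: "qbinom b n 0 = 1"
  by (cases n) auto

lemma qbinom_self: "qbinom b n n = 1"
  by (induction n) (auto simp: qbinom_eq_0)

lemma prod_lessThan_add: "(\<Prod>j<a + c. f j) = (\<Prod>j<a. f j) * (\<Prod>j<c. f (a + j :: nat))"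
  by (induction c) (auto simp: ac_simps)

definition rothe_term :: "'a::comm_ring_1 \<Rightarrow> 'a \<Rightarrow> 'a \<Rightarrow> nat \<Rightarrow> nat \<Rightarrow> 'a" where
  "rothe_term q x y n k = q ^ (k * (k - 1)) * qbinom (q\<^sup>2) n k * y ^ k * x ^ (n - k)"

lemma rothe_term_Suc:
  assumes "k \<le> n"
  shows "rothe_term q x y (Suc n) (Suc k) = x * rothe_term q x y n (Suc k) + y * q ^ (2 * n) * rothe_term q x y n k"
proof -
  have x_power: "x * rothe_term q x y n (Suc k) =
      q ^ (Suc k * k) * qbinom (q\<^sup>2) n (Suc k) * y ^ Suc k * x ^ (n - k)"
  proof (cases "k < n")
    case True
    then have "x ^ (n - k) = x * x ^ (n - Suc k)" by (metis Suc_diff_Suc power_Suc)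
    then show ?thesis by (simp add: rothe_term_def ac_simps)
  next
    case False
    then show ?thesis by (simp add: rothe_term_def qbinom_eq_0)
  qed
  have "k * (k - 1) + 2 * n = Suc k * k + 2 * (n - k)"
    using assms by (cases k) (auto simp: algebra_simps)
  then have exponent: "q ^ (2 * n) * q ^ (k * (k - 1)) = q ^ (Suc k * k) * (q\<^sup>2) ^ (n - k)"
    by (simp flip: power_add power_mult add: add.commute)
  have "y * q ^ (2 * n) * rothe_term q x y n k =
      y * (q ^ (2 * n) * q ^ (k * (k - 1))) * (qbinom (q\<^sup>2) n k * y ^ k * x ^ (n - k))"
    by (simp only: rothe_term_def ac_simps)
  also have "\<dots> = y * (q ^ (Suc k * k) * (q\<^sup>2) ^ (n - k)) * (qbinom (q\<^sup>2) n k * y ^ k * x ^ (n - k))"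
    by (simp only: exponent)
  also have "\<dots> = q ^ (Suc k * k) * ((q\<^sup>2) ^ (n - k) * qbinom (q\<^sup>2) n k) * y ^ Suc k * x ^ (n - k)"
    by (simp only: power_Suc ac_simps)
  finally show ?thesis using x_power by (simp add: rothe_term_def algebra_simps)
qed

text \<open>Rothe's \<open>q\<close>-binomial theorem, written in base \<open>q\<^sup>2\<close> so that the exponent
  \<open>k (k - 1) / 2\<close> becomes integral.\<close>

lemma rothe_identity:
  fixes q x y :: "'a::comm_ring_1"
  shows "(\<Prod>j<n. x + y * q ^ (2 * j)) =
    (\<Sum>k\<le>n. q ^ (k * (k - 1)) * qbinom (q\<^sup>2) n k * y ^ k * x ^ (n - k))"
  unfolding rothe_term_def[symmetric]
proof (induction n)
  case 0
  then show ?case by (simp add: rothe_term_def)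
next
  case (Suc n)
  let ?T = "rothe_term q x y"
  have "(\<Sum>k\<le>Suc n. ?T (Suc n) k) = ?T (Suc n) 0 + (\<Sum>k\<le>n. ?T (Suc n) (Suc k))"
    by (rule sum.atMost_Suc_shift)
  also have "\<dots> = x * ?T n 0 + (\<Sum>k\<le>n. x * ?T n (Suc k) + y * q ^ (2 * n) * ?T n k)"
    by (simp add: rothe_term_Suc rothe_term_def[of q x y "Suc n" 0] rothe_term_def[of q x y n 0])
  also have "\<dots> = x * (?T n 0 + (\<Sum>k\<le>n. ?T n (Suc k))) + y * q ^ (2 * n) * (\<Sum>k\<le>n. ?T n k)"
    by (simp add: sum.distrib sum_distrib_left distrib_left)
  also have "?T n 0 + (\<Sum>k\<le>n. ?T n (Suc k)) = (\<Sum>k\<le>Suc n. ?T n k)"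
    by (rule sum.atMost_Suc_shift[symmetric])
  also have "\<dots> = (\<Sum>k\<le>n. ?T n k)"
    by (simp add: rothe_term_def qbinom_eq_0)
  finally show ?case using Suc.IH by (simp add: algebra_simps)
qed

definition absdiff :: "nat \<Rightarrow> nat \<Rightarrow> nat" where
  "absdiff k M = (if k \<le> M then M - k else k - M)"

lemma rothe_exponent_eq:
  assumes "1 \<le> M" "k \<le> 2 * M"
  shows "k * (k - 1) + (2 * M - 1) * (2 * M - k) = (absdiff k M)\<^sup>2 + (M * (M - 1) + M * (2 * M - 1))"
proof -
  have cast_k: "int (k * (k - 1)) = int k * (int k - 1)" by (cases k) (auto simp: algebra_simps)
  have cast_M: "int (M * (M - 1)) = int M * (int M - 1)" by (cases M) (auto simp: algebra_simps)
  have cast_odd: "int (2 * M - 1) = 2 * int M - 1" using assms by auto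
  have cast_diff: "int (2 * M - k) = 2 * int M - int k" using assms by auto
  have cast_absdiff: "int ((absdiff k M)\<^sup>2) = (int k - int M)\<^sup>2"
    by (auto simp: absdiff_def of_nat_diff power2_eq_square algebra_simps)
  have "int (k * (k - 1) + (2 * M - 1) * (2 * M - k)) =
      int ((absdiff k M)\<^sup>2 + (M * (M - 1) + M * (2 * M - 1)))"
    unfolding of_nat_add cast_k cast_M cast_absdiff unfolding of_nat_mult cast_odd cast_diff
    by (simp add: power2_eq_square algebra_simps)
  then show ?thesis by (simp only: of_nat_eq_iff)
qed

lemma sum_lessThan_double: "(\<Sum>j<M. 2 * j) = M * (M - 1 :: nat)"
proof (induction M)
  case (Suc M)
  then show ?case by (cases M) (simp_all add: algebra_simps)
qed simp

definition odd_poch :: "'a::comm_ring_1 \<Rightarrow> nat \<Rightarrow> 'a" where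
  "odd_poch q M = (\<Prod>j<M. 1 - q ^ (2 * j + 1))"

lemma rothe_product_lower_half:
  fixes q :: "'a::comm_ring_1"
  shows "(\<Prod>j<M. q ^ (2 * M - 1) - q ^ (2 * j)) = (-1) ^ M * q ^ (M * (M - 1)) * odd_poch q M"
proof -
  have "(\<Prod>j<M. q ^ (2 * M - 1) - q ^ (2 * j)) =
      (\<Prod>j<M. - (q ^ (2 * j)) * (1 - q ^ (2 * (M - Suc j) + 1)))"
  proof (intro prod.cong refl)
    fix j assume "j \<in> {..<M}"
    then have "2 * M - 1 = 2 * j + (2 * (M - Suc j) + 1)" by auto
    then have "q ^ (2 * M - 1) = q ^ (2 * j) * q ^ (2 * (M - Suc j) + 1)"
      by (metis power_add)
    then show "q ^ (2 * M - 1) - q ^ (2 * j) = - (q ^ (2 * j)) * (1 - q ^ (2 * (M - Suc j) + 1))"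
      by (simp add: algebra_simps)
  qed
  also have "\<dots> = (\<Prod>j<M. - (q ^ (2 * j))) * (\<Prod>j<M. 1 - q ^ (2 * (M - Suc j) + 1))"
    by (rule prod.distrib)
  also have "(\<Prod>j<M. 1 - q ^ (2 * (M - Suc j) + 1)) = odd_poch q M"
    unfolding odd_poch_def by (rule prod.nat_diff_reindex[where g = "\<lambda>j. 1 - q ^ (2 * j + 1)"])
  also have "(\<Prod>j<M. - (q ^ (2 * j))) = (-1) ^ M * (\<Prod>j<M. q ^ (2 * j))"
    by (induction M) (simp_all add: algebra_simps)
  also have "(\<Prod>j<M. q ^ (2 * j)) = q ^ (M * (M - 1))"
    by (simp only: sum_lessThan_double[symmetric] power_sum)
  finally show ?thesis .
qed

lemma rothe_product_upper_half:
  fixes q :: "'a::comm_ring_1"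
  assumes "1 \<le> M"
  shows "(\<Prod>j<M. q ^ (2 * M - 1) - q ^ (2 * (M + j))) = q ^ (M * (2 * M - 1)) * odd_poch q M"
proof -
  have "(\<Prod>j<M. q ^ (2 * M - 1) - q ^ (2 * (M + j))) = (\<Prod>j<M. q ^ (2 * M - 1) * (1 - q ^ (2 * j + 1)))"
  proof (intro prod.cong refl)
    fix j
    have "2 * (M + j) = (2 * M - 1) + (2 * j + 1)" using assms by auto
    then have "q ^ (2 * (M + j)) = q ^ (2 * M - 1) * q ^ (2 * j + 1)"
      by (metis power_add)
    then show "q ^ (2 * M - 1) - q ^ (2 * (M + j)) = q ^ (2 * M - 1) * (1 - q ^ (2 * j + 1))"
      by (simp add: algebra_simps)
  qed
  then show ?thesis by (simp add: prod.distrib odd_poch_def power_mult[symmetric] mult.commute)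
qed

lemma rothe_identity_symmetric:
  fixes q :: "'a::comm_ring_1"
  assumes M: "1 \<le> M"
  defines "E \<equiv> M * (M - 1) + M * (2 * M - 1)"
  shows "q ^ E * ((-1) ^ M * (odd_poch q M)\<^sup>2) =
    q ^ E * (\<Sum>k\<le>2 * M. (-1) ^ k * q ^ (absdiff k M)\<^sup>2 * qbinom (q\<^sup>2) (2 * M) k)"
proof -
  have "q ^ E * ((-1) ^ M * (odd_poch q M)\<^sup>2) =
      (\<Prod>j<M. q ^ (2 * M - 1) - q ^ (2 * j)) * (\<Prod>j<M. q ^ (2 * M - 1) - q ^ (2 * (M + j)))"
    unfolding rothe_product_lower_half rothe_product_upper_half[OF M] E_def by (simp add: power_add power2_eq_square ac_simps)
  also have "\<dots> = (\<Prod>j<M + M. q ^ (2 * M - 1) - q ^ (2 * j))"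
    by (rule prod_lessThan_add[symmetric])
  also have "\<dots> = (\<Prod>j<2 * M. q ^ (2 * M - 1) + (-1) * q ^ (2 * j))"
    by (simp add: mult_2)
  also have "\<dots> = (\<Sum>k\<le>2 * M. q ^ (k * (k - 1)) * qbinom (q\<^sup>2) (2 * M) k * (-1) ^ k *
      (q ^ (2 * M - 1)) ^ (2 * M - k))"
    by (rule rothe_identity)
  also have "\<dots> = (\<Sum>k\<le>2 * M. q ^ E * ((-1) ^ k * q ^ (absdiff k M)\<^sup>2 * qbinom (q\<^sup>2) (2 * M) k))"
  proof (intro sum.cong refl)
    fix k assume "k \<in> {..2 * M}"
    then have exponent: "q ^ (k * (k - 1)) * (q ^ (2 * M - 1)) ^ (2 * M - k) = q ^ E * q ^ (absdiff k M)\<^sup>2"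
      using rothe_exponent_eq[OF M] by (simp add: E_def add.commute flip: power_mult power_add)
    have "q ^ (k * (k - 1)) * qbinom (q\<^sup>2) (2 * M) k * (-1) ^ k * (q ^ (2 * M - 1)) ^ (2 * M - k) =
        (q ^ (k * (k - 1)) * (q ^ (2 * M - 1)) ^ (2 * M - k)) * ((-1) ^ k * qbinom (q\<^sup>2) (2 * M) k)"
      by (simp only: ac_simps)
    also have "\<dots> = (q ^ E * q ^ (absdiff k M)\<^sup>2) * ((-1) ^ k * qbinom (q\<^sup>2) (2 * M) k)"
      by (simp only: exponent)
    also have "\<dots> = q ^ E * ((-1) ^ k * q ^ (absdiff k M)\<^sup>2 * qbinom (q\<^sup>2) (2 * M) k)"
      by (simp only: ac_simps)
    finally show "q ^ (k * (k - 1)) * qbinom (q\<^sup>2) (2 * M) k * (-1) ^ k * (q ^ (2 * M - 1)) ^ (2 * M - k) =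
        q ^ E * ((-1) ^ k * q ^ (absdiff k M)\<^sup>2 * qbinom (q\<^sup>2) (2 * M) k)" .
  qed
  finally show ?thesis by (simp add: sum_distrib_left)
qed

lemma fps_X_power_mult_cancel:
  assumes "fps_X ^ E * f = fps_X ^ E * (g :: 'a::comm_ring_1 fps)"
  shows "f = g"
proof (rule fps_ext)
  fix n
  have "fps_nth (fps_X ^ E * f) (n + E) = fps_nth (fps_X ^ E * g) (n + E)" using assms by simp
  then show "fps_nth f n = fps_nth g n" by (simp add: fps_X_power_mult_nth)
qed

lemma odd_poch_square_eq:
  assumes M: "1 \<le> M"
  shows "(odd_poch fps_X M)\<^sup>2 =
    (\<Sum>k\<le>2 * M. (-1) ^ (k + M) * fps_X ^ (absdiff k M)\<^sup>2 * qbinom (fps_X\<^sup>2) (2 * M) k :: 'a::comm_ring_1 fps)"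
proof -
  have "(-1) ^ M * (odd_poch fps_X M)\<^sup>2 =
      (\<Sum>k\<le>2 * M. (-1) ^ k * fps_X ^ (absdiff k M)\<^sup>2 * qbinom (fps_X\<^sup>2) (2 * M) k :: 'a fps)"
    by (rule fps_X_power_mult_cancel[OF rothe_identity_symmetric[OF M]])
  then have "(-1) ^ M * ((-1) ^ M * (odd_poch fps_X M)\<^sup>2) =
      (-1) ^ M * (\<Sum>k\<le>2 * M. (-1) ^ k * fps_X ^ (absdiff k M)\<^sup>2 * qbinom (fps_X\<^sup>2) (2 * M) k :: 'a fps)"
    by simp
  moreover have "(-1) ^ M * ((-1) ^ M * (odd_poch fps_X M)\<^sup>2) = (odd_poch fps_X M)\<^sup>2"
    by (simp flip: mult.assoc power_add add: power_mult[symmetric] mult_2[symmetric])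
  ultimately show ?thesis by (simp add: sum_distrib_left power_add ac_simps)
qed

definition q2_poch :: "nat \<Rightarrow> 'a::comm_ring_1 fps" where
  "q2_poch j = (\<Prod>i<j. 1 - fps_X ^ (2 * (i + 1)))"

definition q2_poch_inv :: "nat \<Rightarrow> 'a::comm_ring_1 fps" where
  "q2_poch_inv j = (\<Prod>i<j. fps_geom (2 * (i + 1)))"

lemma q2_poch_inv_Suc:
  "(q2_poch_inv (Suc j) :: 'a::comm_ring_1 fps) = q2_poch_inv j + fps_X ^ (2 * (j + 1)) * q2_poch_inv (Suc j)"
proof -
  have "(q2_poch_inv (Suc j) :: 'a fps) = q2_poch_inv j * fps_geom (2 * (j + 1))"
    by (simp add: q2_poch_inv_def)
  also have "\<dots> = q2_poch_inv j * (1 + fps_X ^ (2 * (j + 1)) * fps_geom (2 * (j + 1)))"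
    by (subst fps_geom_unfold) auto
  also have "\<dots> = q2_poch_inv j + fps_X ^ (2 * (j + 1)) * (q2_poch_inv j * fps_geom (2 * (j + 1)))"
    by (simp only: distrib_left mult_1_right mult.left_commute)
  also have "q2_poch_inv j * fps_geom (2 * (j + 1)) = (q2_poch_inv (Suc j) :: 'a fps)"
    by (simp add: q2_poch_inv_def)
  finally show ?thesis .
qed

lemma fps_cong_q2_poch_inv: "fps_cong 2 (q2_poch_inv j :: 'a::comm_ring_1 fps) 1"
  unfolding q2_poch_inv_def by (rule fps_cong_prod_1) (auto intro: fps_cong_fps_geom)

text \<open>The \<open>q\<close>-Pascal rule and the recursion \<open>q2_poch_inv_Suc\<close> match term by term.\<close>

lemma qbinom_cong_q2_poch_inv:
  "k \<le> n \<Longrightarrow> fps_cong (2 * (k + 1)) (qbinom (fps_X\<^sup>2) n k :: 'a::comm_ring_1 fps) (q2_poch_inv (n - k))"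
proof (induction n arbitrary: k)
  case 0
  then show ?case by (simp add: q2_poch_inv_def)
next
  case (Suc n)
  consider "k = 0" | "k = Suc n" | k' where "k = Suc k'" "k' < n"
    using Suc.prems by (cases k) (auto simp: le_less)
  then show ?case
  proof cases
    case 1
    then show ?thesis using fps_cong_sym[OF fps_cong_q2_poch_inv] by simp
  next
    case 2
    then show ?thesis by (simp add: qbinom_eq_0 qbinom_self q2_poch_inv_def)
  next
    case 3
    then obtain j where j: "n - k' = Suc j" by (metis Suc_diff_Suc)
    have "n - k = j" using j 3 by simp
    then have upper: "fps_cong (2 * (k + 1)) (qbinom (fps_X\<^sup>2) n k :: 'a fps) (q2_poch_inv j)"
      using Suc.IH[of k] 3 by simp
    have "fps_cong (2 * (k' + 1) + 2 * (n - k'))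
        ((fps_X\<^sup>2) ^ (n - k') * qbinom (fps_X\<^sup>2) n k' :: 'a fps) (fps_X ^ (2 * (n - k')) * q2_poch_inv (n - k'))"
      using fps_cong_X_power_mult[OF Suc.IH[of k'], of "2 * (n - k')"] 3 by (simp add: power_mult)
    then have lower: "fps_cong (2 * (k + 1))
        ((fps_X\<^sup>2) ^ (n - k') * qbinom (fps_X\<^sup>2) n k' :: 'a fps) (fps_X ^ (2 * (n - k')) * q2_poch_inv (n - k'))"
      by (rule fps_cong_mono[rotated]) (use 3 in auto)
    have "qbinom (fps_X\<^sup>2) (Suc n) k =
        qbinom (fps_X\<^sup>2) n k + (fps_X\<^sup>2) ^ (n - k') * (qbinom (fps_X\<^sup>2) n k' :: 'a fps)"
      using 3 by simp
    moreover have "q2_poch_inv (Suc n - k) = q2_poch_inv j + fps_X ^ (2 * (n - k')) * (q2_poch_inv (n - k') :: 'a fps)"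
      using q2_poch_inv_Suc[of j] j 3 by simp
    ultimately show ?thesis using fps_cong_add[OF upper lower] by simp
  qed
qed

lemma q2_poch_inv_mult_q2_poch: "q2_poch_inv j * q2_poch j = (1 :: 'a::comm_ring_1 fps)"
proof -
  have "fps_geom (2 * (i + 1)) * (1 - fps_X ^ (2 * (i + 1))) = (1 :: 'a fps)" for i
    using one_minus_X_power_mult_fps_geom[of "2 * (i + 1)"] by (simp only: mult.commute) simp
  then show ?thesis unfolding q2_poch_inv_def q2_poch_def prod.distrib[symmetric] by simp
qed

lemma fps_cong_q2_poch_inv_mult_q2_poch:
  "fps_cong (2 * (min j m + 1)) (q2_poch_inv j * q2_poch m :: 'a::comm_ring_1 fps) 1"
proof (cases "j \<le> m")
  case True
  then obtain c where c: "m = j + c" by (auto simp: le_iff_add)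
  have "(q2_poch m :: 'a fps) = q2_poch j * (\<Prod>i<c. 1 - fps_X ^ (2 * (j + i + 1)))"
    unfolding c q2_poch_def prod_lessThan_add by (simp add: add.assoc)
  then have "(q2_poch_inv j * q2_poch m :: 'a fps) = (\<Prod>i<c. 1 - fps_X ^ (2 * (j + i + 1)))"
    by (simp add: q2_poch_inv_mult_q2_poch mult.assoc[symmetric])
  moreover have "fps_cong (2 * (min j m + 1)) (\<Prod>i<c. 1 - fps_X ^ (2 * (j + i + 1)) :: 'a fps) 1"
    using True by (intro fps_cong_prod_1 fps_cong_1_minus_X_power) simp
  ultimately show ?thesis by simp
next
  case False
  then obtain c where c: "j = m + c" by (metis le_iff_add nat_le_linear)
  have "(q2_poch_inv j :: 'a fps) = q2_poch_inv m * (\<Prod>i<c. fps_geom (2 * (m + i + 1)))"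
    unfolding c q2_poch_inv_def prod_lessThan_add by (simp add: add.assoc)
  then have "(q2_poch_inv j * q2_poch m :: 'a fps) = (q2_poch_inv m * q2_poch m) * (\<Prod>i<c. fps_geom (2 * (m + i + 1)))"
    by (simp only: ac_simps)
  then have "(q2_poch_inv j * q2_poch m :: 'a fps) = (\<Prod>i<c. fps_geom (2 * (m + i + 1)))"
    by (simp only: q2_poch_inv_mult_q2_poch mult_1)
  moreover have "fps_cong (2 * (min j m + 1)) (\<Prod>i<c. fps_geom (2 * (m + i + 1)) :: 'a fps) 1"
    using False by (intro fps_cong_prod_1 fps_cong_fps_geom) auto
  ultimately show ?thesis by simp
qed

text \<open>The partial theta series \<open>\<Sum>\<^sub>|\<^sub>j\<^sub>| \<^sub>\<le> \<^sub>m (-1)\<^sup>j q\<^bsup>j\<^sup>2\<^esup>\<close>, indexed by \<open>k = j + m\<close>.\<close>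

definition theta_partial :: "nat \<Rightarrow> 'a::comm_ring_1 fps" where
  "theta_partial m = (\<Sum>k\<le>2 * m. (-1) ^ (k + m) * fps_X ^ (absdiff k m)\<^sup>2)"

lemma absdiff_square_bound:
  assumes "k \<le> 2 * m"
  shows "2 * m + 1 \<le> 2 * (min k (2 * m - k) + 1) + (absdiff k m)\<^sup>2"
proof -
  have "2 * m + 1 + (absdiff k m - 1)\<^sup>2 \<le> 2 * (min k (2 * m - k) + 1) + (absdiff k m)\<^sup>2"
  proof (cases "absdiff k m")
    case 0
    then show ?thesis using assms by (auto simp: absdiff_def split: if_splits)
  next
    case (Suc t)
    then show ?thesis using assms by (auto simp: absdiff_def power2_eq_square split: if_splits)
  qed
  then show ?thesis by linarith
qed

text \<open>By the finite Jacobi triple product, the \<open>k\<close>-th term is \<open>\<plusminus>q\<^bsup>(k - m)\<^sup>2\<^esup>\<close> times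
  \<open>[2m, k] (q\<^sup>2; q\<^sup>2)\<^sub>m\<close>, which is \<open>1\<close> up to order \<open>2 min k (2m - k) + 2\<close>; together
  with the factor \<open>q\<^bsup>(k - m)\<^sup>2\<^esup>\<close> this reaches beyond \<open>q\<^bsup>2m\<^esup>\<close>.\<close>

lemma odd_poch_square_mult_q2_poch_cong:
  assumes m: "1 \<le> m"
  shows "fps_cong (2 * m + 1) ((odd_poch fps_X m)\<^sup>2 * q2_poch m :: 'a::comm_ring_1 fps) (theta_partial m)"
proof -
  have "((odd_poch fps_X m)\<^sup>2 * q2_poch m :: 'a fps) = (\<Sum>k\<le>2 * m.
      (-1) ^ (k + m) * (fps_X ^ (absdiff k m)\<^sup>2 * (qbinom (fps_X\<^sup>2) (2 * m) k * q2_poch m)))"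
    unfolding odd_poch_square_eq[OF m] sum_distrib_right by (simp add: ac_simps)
  also have "fps_cong (2 * m + 1) \<dots> (theta_partial m)"
    unfolding theta_partial_def
  proof (rule fps_cong_sum)
    fix k assume "k \<in> {..2 * m}"
    then have k: "k \<le> 2 * m" by simp
    have "fps_cong (2 * (k + 1)) (qbinom (fps_X\<^sup>2) (2 * m) k * q2_poch m :: 'a fps)
        (q2_poch_inv (2 * m - k) * q2_poch m)"
      by (rule fps_cong_mult[OF qbinom_cong_q2_poch_inv[OF k] fps_cong_refl])
    then have "fps_cong (2 * (min k (2 * m - k) + 1)) (qbinom (fps_X\<^sup>2) (2 * m) k * q2_poch m :: 'a fps)
        (q2_poch_inv (2 * m - k) * q2_poch m)"
      by (rule fps_cong_mono[rotated]) simp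
    also have "fps_cong (2 * (min k (2 * m - k) + 1)) (q2_poch_inv (2 * m - k) * q2_poch m :: 'a fps) 1"
      using fps_cong_q2_poch_inv_mult_q2_poch by (rule fps_cong_mono[rotated]) simp
    finally have "fps_cong (2 * (min k (2 * m - k) + 1)) (qbinom (fps_X\<^sup>2) (2 * m) k * q2_poch m :: 'a fps) 1" .
    from fps_cong_X_power_mult[OF this, of "(absdiff k m)\<^sup>2"]
    have "fps_cong (2 * (min k (2 * m - k) + 1) + (absdiff k m)\<^sup>2)
        (fps_X ^ (absdiff k m)\<^sup>2 * (qbinom (fps_X\<^sup>2) (2 * m) k * q2_poch m) :: 'a fps) (fps_X ^ (absdiff k m)\<^sup>2)"
      by simp
    then show "fps_cong (2 * m + 1)
        ((-1) ^ (k + m) * (fps_X ^ (absdiff k m)\<^sup>2 * (qbinom (fps_X\<^sup>2) (2 * m) k * q2_poch m)) :: 'a fps)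
        ((-1) ^ (k + m) * fps_X ^ (absdiff k m)\<^sup>2)"
      by (rule fps_cong_mult[OF fps_cong_refl fps_cong_mono[OF absdiff_square_bound[OF k]]])
  qed
  finally show ?thesis .
qed

lemma prod_lessThan_double:
  "(\<Prod>n<2 * (m::nat). g n) = (\<Prod>j<m. g (2 * j)) * (\<Prod>j<m. g (2 * j + 1) :: 'a::comm_monoid_mult)"
  by (induction m) (simp_all add: ac_simps)

lemma ovp_prod_inv_eq:
  "(ovp_prod_inv {1..2 * m} :: 'a::comm_ring_1 fps) =
    (odd_poch fps_X m)\<^sup>2 * q2_poch m * (q2_poch m * q2_poch_inv (2 * m))"
proof -
  have "(ovp_prod_inv {1..2 * m} :: 'a fps) =
      (\<Prod>j<m. ovp_factor_inv (2 * j + 1)) * (\<Prod>j<m. ovp_factor_inv (2 * j + 2))"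
    unfolding ovp_prod_inv_def One_nat_def prod.atLeast1_atMost_eq prod_lessThan_double
    by (simp only: Suc_eq_plus1 add.assoc one_add_one add_0)
  also have "(\<Prod>j<m. ovp_factor_inv (2 * j + 1) :: 'a fps) =
      (odd_poch fps_X m)\<^sup>2 * (\<Prod>j<m. fps_geom (2 * (2 * j + 1)))"
    unfolding ovp_factor_inv_def odd_poch_def prod.distrib prod_power_distrib ..
  also have "(\<Prod>j<m. ovp_factor_inv (2 * j + 2) :: 'a fps) =
      (q2_poch m)\<^sup>2 * (\<Prod>j<m. fps_geom (2 * (2 * j + 2)))"
    unfolding ovp_factor_inv_def q2_poch_def prod.distrib prod_power_distrib
    by (simp only: distrib_left mult_1_right)
  also have "(q2_poch_inv (2 * m) :: 'a fps) =
      (\<Prod>j<m. fps_geom (2 * (2 * j + 1))) * (\<Prod>j<m. fps_geom (2 * (2 * j + 2)))"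
    unfolding q2_poch_inv_def prod_lessThan_double by (simp only: add.assoc one_add_one)
  ultimately show ?thesis by (simp only: power2_eq_square ac_simps)
qed

lemma ovp_prod_inv_cong_theta_partial:
  assumes "1 \<le> m"
  shows "fps_cong (2 * m + 1) (ovp_prod_inv {1..2 * m} :: 'a::comm_ring_1 fps) (theta_partial m)"
proof -
  have "fps_cong (2 * (min (2 * m) m + 1)) (q2_poch_inv (2 * m) * q2_poch m :: 'a fps) 1"
    by (rule fps_cong_q2_poch_inv_mult_q2_poch)
  then have "fps_cong (2 * m + 1) (q2_poch_inv (2 * m) * q2_poch m :: 'a fps) 1"
    by (rule fps_cong_mono[rotated]) simp
  then have "fps_cong (2 * m + 1) (q2_poch m * q2_poch_inv (2 * m) :: 'a fps) 1"
    by (simp only: mult.commute)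
  then have "fps_cong (2 * m + 1) ((odd_poch fps_X m)\<^sup>2 * q2_poch m * (q2_poch m * q2_poch_inv (2 * m)))
      ((odd_poch fps_X m)\<^sup>2 * q2_poch m * 1 :: 'a fps)"
    by (rule fps_cong_mult[OF fps_cong_refl])
  then have "fps_cong (2 * m + 1) (ovp_prod_inv {1..2 * m} :: 'a fps) ((odd_poch fps_X m)\<^sup>2 * q2_poch m)"
    unfolding ovp_prod_inv_eq by (simp only: mult_1_right)
  also have "fps_cong (2 * m + 1) ((odd_poch fps_X m)\<^sup>2 * q2_poch m :: 'a fps) (theta_partial m)"
    by (rule odd_poch_square_mult_q2_poch_cong[OF assms])
  finally show ?thesis .
qed

section \<open>Congruences modulo 3 and 4\<close>

lemma fps_numeral_eq_0: "(numeral n :: 'a::comm_ring_1) = 0 \<Longrightarrow> (numeral n :: 'a fps) = 0"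
  by (metis fps_const_0_eq_0 numeral_fps_const)

lemma cube_add_char_3: "(3::'a::comm_ring_1) = 0 \<Longrightarrow> (a + b :: 'a) ^ 3 = a ^ 3 + b ^ 3"
proof -
  assume "(3::'a) = 0"
  moreover have "(a + b) ^ 3 = a ^ 3 + b ^ 3 + 3 * (a * a * b + a * b * b)"
    by (simp add: power3_eq_cube algebra_simps)
  ultimately show ?thesis by simp
qed

lemma cube_diff_char_3: "(3::'a::comm_ring_1) = 0 \<Longrightarrow> (a - b :: 'a) ^ 3 = a ^ 3 - b ^ 3"
  using cube_add_char_3[of a "- b"] by (simp add: power_minus_odd)

lemma fps_geom_cube:
  assumes char: "(3::'a::comm_ring_1) = 0" and m: "0 < m"
  shows "(fps_geom m :: 'a fps) ^ 3 = fps_geom (3 * m)"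
proof -
  have "(1 - fps_X ^ m :: 'a fps) ^ 3 = 1 - fps_X ^ (3 * m)"
    using cube_diff_char_3[OF fps_numeral_eq_0[OF char]] by (simp add: power_mult[symmetric] mult.commute)
  then have "(1 - fps_X ^ (3 * m)) * (fps_geom m :: 'a fps) ^ 3 = ((1 - fps_X ^ m) * fps_geom m) ^ 3"
    by (simp only: power_mult_distrib)
  then have inv: "(1 - fps_X ^ (3 * m)) * (fps_geom m :: 'a fps) ^ 3 = 1"
    by (simp add: one_minus_X_power_mult_fps_geom[OF m])
  have "(fps_geom m :: 'a fps) ^ 3 = fps_geom m ^ 3 * ((1 - fps_X ^ (3 * m)) * fps_geom (3 * m))"
    using m by (simp add: one_minus_X_power_mult_fps_geom)
  also have "\<dots> = ((1 - fps_X ^ (3 * m)) * fps_geom m ^ 3) * fps_geom (3 * m)"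
    by (simp only: ac_simps)
  finally show ?thesis by (simp only: inv mult_1_left)
qed

lemma ovp_factor_cube:
  assumes char: "(3::'a::comm_ring_1) = 0" and m: "0 < m"
  shows "(ovp_factor m :: 'a fps) ^ 3 = ovp_factor (3 * m)"
proof -
  have "(1 + fps_X ^ m :: 'a fps) ^ 3 = 1 + fps_X ^ (3 * m)"
    using cube_add_char_3[OF fps_numeral_eq_0[OF char]] by (simp add: power_mult[symmetric] mult.commute)
  then show ?thesis unfolding ovp_factor_def power_mult_distrib fps_geom_cube[OF char m] by simp
qed

lemma ovp_prod_cube:
  assumes "(3::'a::comm_ring_1) = 0" "0 \<notin> S"
  shows "(ovp_prod S :: 'a fps) ^ 3 = ovp_prod ((\<lambda>m. 3 * m) ` S)"
proof -
  have "(ovp_prod S :: 'a fps) ^ 3 = (\<Prod>m\<in>S. ovp_factor (3 * m))"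
    unfolding ovp_prod_def prod_power_distrib
    by (rule prod.cong[OF refl], rule ovp_factor_cube) (use assms in \<open>auto intro: gr0I\<close>)
  also have "\<dots> = ovp_prod ((\<lambda>m. 3 * m) ` S)"
    unfolding ovp_prod_def by (subst prod.reindex) (auto simp: inj_on_def)
  finally show ?thesis .
qed

lemma fps_cong_ovp_prod_truncate:
  assumes "finite S" "0 \<notin> S"
  shows "fps_cong (K + 1) (ovp_prod S :: 'a::comm_ring_1 fps) (ovp_prod {x\<in>S. x \<le> K})"
proof -
  have split: "(ovp_prod S :: 'a fps) = ovp_prod {x\<in>S. x \<le> K} * (\<Prod>m\<in>S - {x. x \<le> K}. ovp_factor m)"
    unfolding ovp_prod_def using prod.Int_Diff[OF assms(1), of _ "{x. x \<le> K}"]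
    by (simp add: Int_def conj_commute)
  have "fps_cong (K + 1) (\<Prod>m\<in>S - {x. x \<le> K}. ovp_factor m :: 'a fps) 1"
    by (rule fps_cong_prod_1) (use assms in \<open>auto intro!: fps_cong_ovp_factor\<close>)
  from fps_cong_mult[OF fps_cong_refl this] show ?thesis unfolding split by (simp only: mult_1_right)
qed

lemma fps_cong_ovp_prod_cube:
  assumes "(3::'a::comm_ring_1) = 0" "finite S" "0 \<notin> S"
  shows "fps_cong (K + 1) ((ovp_prod S :: 'a fps) ^ 3) (ovp_prod {x \<in> (\<lambda>m. 3 * m) ` S. x \<le> K})"
  unfolding ovp_prod_cube[OF assms(1,3)] by (rule fps_cong_ovp_prod_truncate) (use assms in auto)

lemma ovp_prod_inclusion_exclusion:
  assumes "finite U"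
  shows "(ovp_prod U :: 'a::comm_ring_1 fps) * ovp_prod {m\<in>U. P m \<and> Q m} =
    ovp_prod {m\<in>U. \<not> P m \<and> \<not> Q m} * ovp_prod {m\<in>U. P m} * ovp_prod {m\<in>U. Q m}"
proof -
  define A where "A = {m\<in>U. \<not> P m \<and> \<not> Q m}"
  define DP where "DP = {m\<in>U. P m}"
  define DQ where "DQ = {m\<in>U. Q m}"
  have fin: "finite A" "finite DP" "finite DQ" using assms by (auto simp: A_def DP_def DQ_def)
  have U: "U = A \<union> (DP \<union> DQ)" and disjoint: "A \<inter> (DP \<union> DQ) = {}"
    and both: "{m\<in>U. P m \<and> Q m} = DP \<inter> DQ"
    by (auto simp: A_def DP_def DQ_def)
  have "(ovp_prod U :: 'a fps) * ovp_prod (DP \<inter> DQ) = ovp_prod A * (ovp_prod (DP \<union> DQ) * ovp_prod (DP \<inter> DQ))"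
    unfolding ovp_prod_def by (subst U) (simp add: prod.union_disjoint fin disjoint mult.assoc)
  also have "\<dots> = ovp_prod A * ovp_prod DP * ovp_prod DQ"
    unfolding ovp_prod_def by (simp add: prod.union_inter fin mult.assoc)
  finally show ?thesis unfolding both A_def DP_def DQ_def .
qed

lemma triple_image_dvd_atMost:
  assumes "coprime L (3::nat)"
  shows "{x \<in> (\<lambda>m. 3 * m) ` {m\<in>{1..K}. L dvd m}. x \<le> K} = {m\<in>{1..K}. 3 dvd m \<and> L dvd m}"
proof (intro set_eqI iffI)
  fix x assume "x \<in> {x \<in> (\<lambda>m. 3 * m) ` {m\<in>{1..K}. L dvd m}. x \<le> K}"
  then show "x \<in> {m\<in>{1..K}. 3 dvd m \<and> L dvd m}" by auto
next
  fix x assume x: "x \<in> {m\<in>{1..K}. 3 dvd m \<and> L dvd m}"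
  then obtain y where y: "x = 3 * y" by (auto elim!: dvdE)
  then have "L dvd y" using x assms by (simp add: coprime_dvd_mult_right_iff)
  then show "x \<in> {x \<in> (\<lambda>m. 3 * m) ` {m\<in>{1..K}. L dvd m}. x \<le> K}"
    using x y by (auto simp: image_iff)
qed

text \<open>Write \<open>P\<^sub>S\<close> for \<open>ovp_prod S\<close> and \<open>A\<close> for the parts not divisible by \<open>3\<close> or \<open>L\<close>.
  Inclusion-exclusion gives \<open>P\<^sub>A = P\<^sub>U P\<^sub>3\<^sub>L / (P\<^sub>3 P\<^sub>L)\<close>, and in characteristic \<open>3\<close> the
  Frobenius identities \<open>P\<^sub>3 = P\<^sub>U\<^sup>3\<close>, \<open>P\<^sub>3\<^sub>L = P\<^sub>L\<^sup>3\<close> (as \<open>L\<close> is coprime to \<open>3\<close>) leave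
  \<open>P\<^sub>L\<^sup>2 / P\<^sub>U\<^sup>2\<close>.\<close>

lemma fps_cong_ovp_prod_char_3:
  fixes K L :: nat
  assumes char: "(3::'a::comm_ring_1) = 0" and L: "coprime L 3"
  defines "U \<equiv> {1..K}"
  shows "fps_cong (K + 1) (ovp_prod {m\<in>U. \<not> 3 dvd m \<and> \<not> L dvd m} :: 'a fps)
    ((ovp_prod {m\<in>U. L dvd m})\<^sup>2 * (ovp_prod_inv U)\<^sup>2)"
proof -
  define A where "A = {m\<in>U. \<not> 3 dvd m \<and> \<not> L dvd m}"
  define D3 where "D3 = {m\<in>U. 3 dvd m}"
  define DL where "DL = {m\<in>U. L dvd m}"
  define D3L where "D3L = {m\<in>U. 3 dvd m \<and> L dvd m}"
  have zero: "0 \<notin> U" "0 \<notin> DL" by (auto simp: U_def DL_def)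
  have "finite U" by (simp add: U_def)
  from ovp_prod_inclusion_exclusion[OF this, of "\<lambda>m. 3 dvd m" "\<lambda>m. L dvd m"]
  have incl_excl: "(ovp_prod U :: 'a fps) * ovp_prod D3L = ovp_prod A * ovp_prod D3 * ovp_prod DL"
    unfolding A_def D3_def DL_def D3L_def .
  have "{x \<in> (\<lambda>m. 3 * m) ` U. x \<le> K} = D3"
    by (auto simp: U_def D3_def image_iff elim!: dvdE)
  then have cube_U: "fps_cong (K + 1) ((ovp_prod U :: 'a fps) ^ 3) (ovp_prod D3)"
    using fps_cong_ovp_prod_cube[OF char _ zero(1), of K] by (simp add: U_def)
  have "{x \<in> (\<lambda>m. 3 * m) ` DL. x \<le> K} = D3L"
    using triple_image_dvd_atMost[OF L, of K] by (simp add: U_def DL_def D3L_def)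
  then have cube_DL: "fps_cong (K + 1) ((ovp_prod DL :: 'a fps) ^ 3) (ovp_prod D3L)"
    using fps_cong_ovp_prod_cube[OF char _ zero(2), of K] by (simp add: DL_def U_def)
  have inv_U: "ovp_prod U * ovp_prod_inv U = (1 :: 'a fps)" by (rule ovp_prod_mult_inv[OF zero(1)])
  have inv_DL: "ovp_prod DL * ovp_prod_inv DL = (1 :: 'a fps)" by (rule ovp_prod_mult_inv[OF zero(2)])
  define C where "C = (ovp_prod_inv U) ^ 3 * (ovp_prod_inv DL :: 'a fps)"
  have "(ovp_prod A :: 'a fps) = ovp_prod A * (ovp_prod U * ovp_prod_inv U) ^ 3 * (ovp_prod DL * ovp_prod_inv DL)"
    by (simp add: inv_U inv_DL)
  also have "\<dots> = (ovp_prod A * ovp_prod U ^ 3 * ovp_prod DL) * C"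
    by (simp only: C_def power_mult_distrib ac_simps)
  also have "fps_cong (K + 1) \<dots> ((ovp_prod A * ovp_prod D3 * ovp_prod DL) * C)"
    by (rule fps_cong_mult[OF fps_cong_mult[OF fps_cong_mult[OF fps_cong_refl cube_U] fps_cong_refl] fps_cong_refl])
  also have "(ovp_prod A * ovp_prod D3 * ovp_prod DL) * C = (ovp_prod U * ovp_prod D3L) * C"
    by (simp only: incl_excl)
  also have "fps_cong (K + 1) \<dots> ((ovp_prod U * ovp_prod DL ^ 3) * C)"
    by (rule fps_cong_mult[OF fps_cong_mult[OF fps_cong_refl fps_cong_sym[OF cube_DL]] fps_cong_refl])
  also have "(ovp_prod U * ovp_prod DL ^ 3) * C =
      (ovp_prod DL)\<^sup>2 * (ovp_prod_inv U)\<^sup>2 * ((ovp_prod U * ovp_prod_inv U) * (ovp_prod DL * ovp_prod_inv DL))"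
    by (simp only: C_def power2_eq_square power3_eq_cube ac_simps)
  also have "\<dots> = (ovp_prod DL)\<^sup>2 * (ovp_prod_inv U)\<^sup>2"
    by (simp add: inv_U inv_DL)
  finally show ?thesis unfolding A_def DL_def .
qed

lemma fps_mult_nth_nonzero:
  assumes "fps_nth (f * g) n \<noteq> (0::'a::comm_ring_1)"
  obtains i where "i \<le> n" "fps_nth f i \<noteq> 0" "fps_nth g (n - i) \<noteq> 0"
proof -
  have "\<exists>i\<in>{0..n}. fps_nth f i * fps_nth g (n - i) \<noteq> 0"
  proof (rule ccontr)
    assume "\<not> ?thesis"
    then have "(\<Sum>i=0..n. fps_nth f i * fps_nth g (n - i)) = 0" by (intro sum.neutral) auto
    then show False using assms by (simp add: fps_mult_nth)
  qed
  then show ?thesis using that by (metis atLeastAtMost_iff mult_zero_left mult_zero_right)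
qed

lemma theta_partial_nth_nonzero:
  assumes "fps_nth (theta_partial m :: 'a::comm_ring_1 fps) n \<noteq> 0"
  obtains x where "n = x\<^sup>2"
proof -
  have sign_nth: "fps_nth ((-1) ^ j :: 'a fps) i = (if i = 0 then (-1) ^ j else 0)" for i j
    by (induction j) (auto simp: fps_one_nth)
  have "fps_nth ((-1) ^ (k + m) * fps_X ^ (absdiff k m)\<^sup>2 :: 'a fps) n =
      (if n = (absdiff k m)\<^sup>2 then (-1) ^ (k + m) else 0)" for k
    by (simp add: fps_X_power_mult_right_nth sign_nth)
  then have "\<exists>k. n = (absdiff k m)\<^sup>2"
    using assms by (auto simp: theta_partial_def fps_sum_nth intro: ccontr)
  then show ?thesis using that by blast
qed

lemma theta_partial_square_nth_nonzero:
  assumes "fps_nth ((theta_partial m)\<^sup>2 :: 'a::comm_ring_1 fps) n \<noteq> 0"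
  obtains x y where "n = x\<^sup>2 + y\<^sup>2"
proof -
  obtain i where "i \<le> n" "fps_nth (theta_partial m :: 'a fps) i \<noteq> 0"
    "fps_nth (theta_partial m :: 'a fps) (n - i) \<noteq> 0"
    using assms by (auto simp: power2_eq_square elim: fps_mult_nth_nonzero)
  then show ?thesis using that by (metis theta_partial_nth_nonzero le_add_diff_inverse)
qed

definition fps_supp_dvd :: "nat \<Rightarrow> 'a::comm_ring_1 fps \<Rightarrow> bool" where
  "fps_supp_dvd L f \<longleftrightarrow> (\<forall>i. fps_nth f i \<noteq> 0 \<longrightarrow> L dvd i)"

lemma fps_supp_dvd_mult:
  assumes "fps_supp_dvd L f" "fps_supp_dvd L g"
  shows "fps_supp_dvd L (f * g)"
  unfolding fps_supp_dvd_def
proof (intro allI impI)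
  fix n assume "fps_nth (f * g) n \<noteq> 0"
  then obtain i where "i \<le> n" "fps_nth f i \<noteq> 0" "fps_nth g (n - i) \<noteq> 0"
    by (rule fps_mult_nth_nonzero)
  then have "L dvd i" "L dvd (n - i)" using assms by (auto simp: fps_supp_dvd_def)
  then show "L dvd n" using \<open>i \<le> n\<close> by (metis dvd_add le_add_diff_inverse)
qed

lemma fps_supp_dvd_ovp_prod:
  assumes "finite S" "\<And>m. m \<in> S \<Longrightarrow> 0 < m \<and> L dvd m"
  shows "fps_supp_dvd L (ovp_prod S :: 'a::comm_ring_1 fps)"
  using assms unfolding ovp_prod_def
proof (induction S rule: finite_induct)
  case empty
  then show ?case by (simp add: fps_supp_dvd_def fps_one_nth)
next
  case (insert m S)
  then have "fps_supp_dvd L (ovp_factor m :: 'a fps)"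
    by (auto simp: fps_supp_dvd_def ovp_factor_nth intro: dvd_trans split: if_splits)
  with insert show ?case by (simp add: fps_supp_dvd_mult)
qed

theorem three_dvd_Bbar_if_no_sum_two_squares:
  fixes L N :: nat
  assumes L: "coprime L 3"
    and not_sum_squares: "\<And>i x y. i \<le> N \<Longrightarrow> L dvd i \<Longrightarrow> N - i \<noteq> x\<^sup>2 + y\<^sup>2"
  shows "3 dvd Bbar L 3 N"
proof -
  have "1 \<le> N" using not_sum_squares[of 0 0 0] by (cases N) auto
  define DL where "DL = {m\<in>{1..2 * N}. L dvd m}"
  have char: "(3::3) = 0" by simp
  have "(of_nat (Bbar L 3 N) :: 3) = fps_nth (ovp_prod {m\<in>{1..2 * N}. \<not> L dvd m \<and> \<not> 3 dvd m} :: 3 fps) N"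
    by (rule of_nat_Bbar) simp
  also have "\<dots> = fps_nth ((ovp_prod DL)\<^sup>2 * (theta_partial N)\<^sup>2 :: 3 fps) N"
  proof (rule fps_cong_nth_eq)
    have "fps_cong (2 * N + 1) (ovp_prod {m\<in>{1..2 * N}. \<not> L dvd m \<and> \<not> 3 dvd m} :: 3 fps)
        ((ovp_prod DL)\<^sup>2 * (ovp_prod_inv {1..2 * N})\<^sup>2)"
      using fps_cong_ovp_prod_char_3[OF char L, of "2 * N"] unfolding DL_def by (simp add: conj_commute)
    also have "fps_cong (2 * N + 1) ((ovp_prod DL)\<^sup>2 * (ovp_prod_inv {1..2 * N})\<^sup>2 :: 3 fps)
        ((ovp_prod DL)\<^sup>2 * (theta_partial N)\<^sup>2)"
      by (rule fps_cong_mult[OF fps_cong_refl fps_cong_power[OF ovp_prod_inv_cong_theta_partial[OF \<open>1 \<le> N\<close>]]])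
    finally show "fps_cong (2 * N + 1) (ovp_prod {m\<in>{1..2 * N}. \<not> L dvd m \<and> \<not> 3 dvd m} :: 3 fps)
        ((ovp_prod DL)\<^sup>2 * (theta_partial N)\<^sup>2)" .
  qed simp
  also have "\<dots> = 0"
  proof (rule ccontr)
    assume "fps_nth ((ovp_prod DL)\<^sup>2 * (theta_partial N)\<^sup>2 :: 3 fps) N \<noteq> 0"
    then obtain i where i: "i \<le> N" "fps_nth ((ovp_prod DL)\<^sup>2 :: 3 fps) i \<noteq> 0"
      "fps_nth ((theta_partial N)\<^sup>2 :: 3 fps) (N - i) \<noteq> 0"
      by (rule fps_mult_nth_nonzero)
    have "fps_supp_dvd L ((ovp_prod DL)\<^sup>2 :: 3 fps)"
      unfolding power2_eq_square by (intro fps_supp_dvd_mult fps_supp_dvd_ovp_prod) (auto simp: DL_def)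
    then have "L dvd i" using i(2) by (simp add: fps_supp_dvd_def)
    moreover obtain x y where "N - i = x\<^sup>2 + y\<^sup>2" using i(3) by (rule theta_partial_square_nth_nonzero)
    ultimately show False using not_sum_squares i(1) by blast
  qed
  finally show ?thesis by (simp add: of_nat_eq_0_iff_char_dvd)
qed

lemma prod_one_plus_2_char_4:
  assumes "(4::'a::comm_ring_1) = 0" "finite S"
  shows "(\<Prod>m\<in>S. 1 + 2 * Y m) = 1 + 2 * (\<Sum>m\<in>S. Y m :: 'a)"
  using assms(2)
proof (induction S rule: finite_induct)
  case (insert x S)
  have "(1 + 2 * Y x) * (1 + 2 * (\<Sum>m\<in>S. Y m)) = 1 + 2 * (Y x + (\<Sum>m\<in>S. Y m)) + 4 * (Y x * (\<Sum>m\<in>S. Y m))"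
    by (simp add: algebra_simps)
  then show ?case using insert assms(1) by simp
qed simp

lemma nth_ovp_prod_char_4:
  assumes char: "(4::'a::comm_ring_1) = 0" and S: "finite S" "0 \<notin> S" and N: "0 < N"
  shows "fps_nth (ovp_prod S :: 'a fps) N = 2 * of_nat (card {m\<in>S. m dvd N})"
proof -
  define F where "F = (\<Sum>m\<in>S. fps_X ^ m * fps_geom m :: 'a fps)"
  have pos: "0 < m" if "m \<in> S" for m using S(2) that by (cases m) auto
  have "(ovp_prod S :: 'a fps) = (\<Prod>m\<in>S. 1 + 2 * (fps_X ^ m * fps_geom m))"
    unfolding ovp_prod_def by (rule prod.cong[OF refl]) (simp add: ovp_factor_eq pos)
  also have "\<dots> = 1 + 2 * F"
    unfolding F_def by (rule prod_one_plus_2_char_4[OF fps_numeral_eq_0[OF char] S(1)])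
  finally have "fps_nth (ovp_prod S :: 'a fps) N = fps_nth F N + fps_nth F N"
    using N by (simp only: mult_2 fps_add_nth fps_one_nth) simp
  also have "fps_nth F N = (\<Sum>m\<in>S. if m dvd N then 1 else 0)"
    unfolding F_def fps_sum_nth using N by (intro sum.cong refl) (simp add: X_power_mult_fps_geom_nth pos)
  also have "\<dots> = of_nat (card {m\<in>S. m dvd N})"
    using S(1) by (simp add: sum.If_cases Int_def)
  finally show ?thesis by (simp only: mult_2)
qed

theorem Bbar_cong_card_divisors:
  assumes "0 < N"
  shows "[Bbar l1 l2 N = 2 * card {m. m dvd N \<and> \<not> l1 dvd m \<and> \<not> l2 dvd m}] (mod 4)"
proof -
  have divisors: "{m\<in>{m\<in>{1..N}. \<not> l1 dvd m \<and> \<not> l2 dvd m}. m dvd N} = {m. m dvd N \<and> \<not> l1 dvd m \<and> \<not> l2 dvd m}"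
    using assms by (auto dest: dvd_imp_le intro: gr0I)
  have char: "(4::4) = 0" by simp
  have "(of_nat (Bbar l1 l2 N) :: 4) = fps_nth (ovp_prod {m\<in>{1..N}. \<not> l1 dvd m \<and> \<not> l2 dvd m} :: 4 fps) N"
    by (rule of_nat_Bbar) simp
  also have "\<dots> = of_nat (2 * card {m. m dvd N \<and> \<not> l1 dvd m \<and> \<not> l2 dvd m})"
    using nth_ovp_prod_char_4[OF char _ _ assms, of "{m\<in>{1..N}. \<not> l1 dvd m \<and> \<not> l2 dvd m}"]
    unfolding divisors by simp
  finally show ?thesis by (simp only: of_nat_eq_iff_cong_CHAR) simp
qed

lemma three_dvd_Bbar_pow2_4_power_mult:
  assumes "2 * k + 1 < \<alpha>"
  shows "3 dvd Bbar (2 ^ \<alpha>) 3 (4 ^ k * (4 * n + 3))"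
proof (rule three_dvd_Bbar_if_no_sum_two_squares)
  show "coprime ((2::nat) ^ \<alpha>) 3" by simp
  fix i x y assume "i \<le> 4 ^ k * (4 * n + 3)" "2 ^ \<alpha> dvd i"
  then obtain n' where "4 ^ k * (4 * n + 3) - i = 4 ^ k * (4 * n' + 3)"
    using four_power_mult_diff_multiple[OF assms] by blast
  then show "4 ^ k * (4 * n + 3) - i \<noteq> x\<^sup>2 + y\<^sup>2"
    using sum_two_squares_neq_4_power_mult by metis
qed

lemma even_of_cong_double_mod_4: "[b = 2 * c] (mod 4) \<Longrightarrow> even (b::nat)"
  unfolding cong_def by presburger

lemma four_dvd_of_cong_double_mod_4: "[b = 2 * c] (mod 4) \<Longrightarrow> even c \<Longrightarrow> 4 dvd (b::nat)"
  unfolding cong_def by presburger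

lemma four_dvd_Bbar_pow2_8n_plus_7:
  assumes "2 < \<alpha>"
  shows "4 dvd Bbar (2 ^ \<alpha>) 3 (8 * n + 7)"
proof -
  have "\<not> 2 ^ \<alpha> dvd m" if "m dvd 8 * n + 7" for m
  proof
    assume "2 ^ \<alpha> dvd m"
    moreover have "(2::nat) dvd 2 ^ \<alpha>" using assms by simp
    ultimately have "2 dvd 8 * n + 7" using that by (meson dvd_trans)
    then show False by simp
  qed
  then have "{m. m dvd 8 * n + 7 \<and> \<not> 2 ^ \<alpha> dvd m \<and> \<not> 3 dvd m} = {m. m dvd 8 * n + 7 \<and> \<not> 3 dvd m}"
    by blast
  moreover have "even (card {m. m dvd 8 * n + 7 \<and> \<not> 3 dvd m})"
    by (rule even_card_divisors_not_dvd_3) simp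
  ultimately show ?thesis
    using four_dvd_of_cong_double_mod_4[OF Bbar_cong_card_divisors[of "8 * n + 7" "2 ^ \<alpha>" 3]] by simp
qed

theorem theorem2:
  shows "(\<forall>n k \<alpha> :: nat. \<alpha> > 2 * k + 1 \<longrightarrow>
            [Bbar (2 ^ \<alpha>) 3 (4 ^ k * (4 * n + 3)) = 0] (mod 6))
       \<and> (\<forall>n \<alpha> :: nat. \<alpha> > 2 \<longrightarrow> [Bbar (2 ^ \<alpha>) 3 (8 * n + 7) = 0] (mod 12))"
proof (intro conjI allI impI)
  fix n k \<alpha> :: nat
  assume "\<alpha> > 2 * k + 1"
  then have "3 dvd Bbar (2 ^ \<alpha>) 3 (4 ^ k * (4 * n + 3))" by (rule three_dvd_Bbar_pow2_4_power_mult)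
  moreover have "even (Bbar (2 ^ \<alpha>) 3 (4 ^ k * (4 * n + 3)))"
    by (rule even_of_cong_double_mod_4[OF Bbar_cong_card_divisors]) simp
  ultimately show "[Bbar (2 ^ \<alpha>) 3 (4 ^ k * (4 * n + 3)) = 0] (mod 6)"
    unfolding cong_0_iff by presburger
next
  fix n \<alpha> :: nat
  assume "\<alpha> > 2"
  then have "3 dvd Bbar (2 ^ \<alpha>) 3 (8 * n + 7)"
    using three_dvd_Bbar_pow2_4_power_mult[of 0 \<alpha> "2 * n + 1"] by (simp add: add.commute)
  moreover have "4 dvd Bbar (2 ^ \<alpha>) 3 (8 * n + 7)" using \<open>\<alpha> > 2\<close> by (rule four_dvd_Bbar_pow2_8n_plus_7)
  ultimately show "[Bbar (2 ^ \<alpha>) 3 (8 * n + 7) = 0] (mod 12)"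
    unfolding cong_0_iff by presburger
qed

end
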